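(* Let $L_2>0$, let $T^a,T^b\in\mathbb{R}^3$ and $\bar T\in\mathbb{R}$ be constants, and define $$P_2(x,L_2)=\begin{cases}0 & x>1/L_2\\ L_2(1-L_2x)^3 & 0<x\le 1/L_2\\ L_2\sqrt{15(L_2x-1/5)^2+2/5} & x\le 0.\end{cases}$$ Let $h(R^a,R^b)=\bar T^2-\|R^aT^a-R^bT^b\|^2$ for $R^a,R^b\in\mathbb{R}^{3\times3}$ and $\bar h(R^a,R^b)=P_2(h(R^a,R^b),L_2)$. Then: $\bar h$ is twice differentiable on $\mathbb{R}^{3\times3}\times\mathbb{R}^{3\times3}$ with locally Lipschitz second derivatives; there is a polynomial $q$ such that $\bar h$ is $q(L_2)$-curvature bounded; and $x\mapsto P_2(x,L_2)$ is a monotone function of $\max(1/L_2-x,0)$ with $\min_xP_2(x,L_2)=0$ and $P_2(0,L_2)=L_2$.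
   Context: A function $\phi$ is $L$-curvature bounded if $\phi(x)+\frac L2\|x\|^2$ is convex and $\nabla\phi$ is $L$-Lipschitz (matrices are identified with vectors). *)

theory Defs
  imports "HOL-Analysis.Analysis" "HOL-Computational_Algebra.Polynomial"
begin

text \<open>Matrices in R^{3x3} are real^3^3; its norm is the Frobenius norm (matrices identified
 with vectors). Pairs (R^a, R^b) live in the product space with the Euclidean product norm.\<close>

definition P2 :: "real \<Rightarrow> real \<Rightarrow> real" where
  "P2 x L2 = (if x > 1 / L2 then 0
              else if 0 < x then L2 * (1 - L2 * x) ^ 3
              else L2 * sqrt (15 * (L2 * x - 1/5)^2 + 2/5))"

definition hfun :: "real^3 \<Rightarrow> real^3 \<Rightarrow> real \<Rightarrow> (real^3^3) \<times> (real^3^3) \<Rightarrow> real" where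
  "hfun Ta Tb Tbar R = Tbar^2 - (norm (fst R *v Ta - snd R *v Tb))^2"

definition hbar :: "real^3 \<Rightarrow> real^3 \<Rightarrow> real \<Rightarrow> real \<Rightarrow> (real^3^3) \<times> (real^3^3) \<Rightarrow> real" where
  "hbar Ta Tb Tbar L2 R = P2 (hfun Ta Tb Tbar R) L2"

definition curvature_bounded :: "real \<Rightarrow> ('a::real_inner \<Rightarrow> real) \<Rightarrow> bool" where
  "curvature_bounded L \<phi> \<longleftrightarrow>
     convex_on UNIV (\<lambda>x. \<phi> x + L / 2 * (norm x)^2) \<and>
     (\<exists>g. (\<forall>x. (\<phi> has_derivative (\<lambda>v. g x \<bullet> v)) (at x)) \<and>
          (\<forall>x y. dist (g x) (g y) \<le> L * dist x y))"

definition twice_diff_loc_lip_hess :: "('a::real_inner \<Rightarrow> real) \<Rightarrow> bool" where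
  "twice_diff_loc_lip_hess \<phi> \<longleftrightarrow>
     (\<exists>g H. (\<forall>x. (\<phi> has_derivative (\<lambda>v. g x \<bullet> v)) (at x)) \<and>
            (\<forall>x. (g has_derivative blinfun_apply (H x)) (at x)) \<and>
            (\<forall>x. \<exists>e>0. \<exists>K. \<forall>y\<in>ball x e. \<forall>z\<in>ball x e. dist (H y) (H z) \<le> K * dist y z))"

end

theory Submission
  imports Defs
begin

(* The three pieces of P2 agree to second order at the break points 0 and 1/L, so P2 is C^2 with
   P2' <= 0, |P2'| <= 4 L^2, |P2''| <= 6 L^3 and |x P2''(x)| <= 6 L^2, and P2'' is Lipschitz on
   bounded sets.  Write h R = Tbar^2 - |A R|^2 for the linear map A R = R^a T^a - R^b T^b and
   M = A^* A.  The Hessian of P2 o h is -2 P2'(h) M + 4 P2''(h) (M R)(M R)^T, and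
   |M R|^2 <= |A^*|^2 (Tbar^2 - h), so the bound on x P2''(x) makes the Hessian bounded by a
   polynomial in L.  Hence the gradient is Lipschitz with that constant, and a function with a
   K-Lipschitz gradient becomes convex after adding K/2 |x|^2. *)

section \<open>Lipschitz continuity on bounded sets\<close>

(* On Euclidean spaces this is local Lipschitz continuity; in this form it is closed under
   composition without any bookkeeping of radii. *)
definition lipschitz_on_bounded_sets :: "('a::metric_space \<Rightarrow> 'b::metric_space) \<Rightarrow> bool" where
  "lipschitz_on_bounded_sets f \<longleftrightarrow> (\<forall>S. bounded S \<longrightarrow> (\<exists>K. K-lipschitz_on S f))"

lemma lipschitz_on_bounded_setsE:
  assumes "lipschitz_on_bounded_sets f" "bounded S"
  obtains K where "K-lipschitz_on S f"
  using assms unfolding lipschitz_on_bounded_sets_def by blast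

lemma bounded_lipschitz_image:
  assumes f: "K-lipschitz_on S f" and S: "bounded S"
  shows "bounded (f ` S)"
proof (cases "S = {}")
  case False
  then obtain a where a: "a \<in> S"
    by blast
  obtain e where e: "\<forall>y\<in>S. dist a y \<le> e"
    using S bounded_any_center by blast
  have "dist (f a) (f y) \<le> K * e" if "y \<in> S" for y
    using lipschitz_onD[OF f a that] mult_left_mono[OF bspec[OF e that] lipschitz_on_nonneg[OF f]]
    by linarith
  then show ?thesis
    unfolding bounded_any_center[of _ "f a"] by blast
qed simp

lemma lipschitz_on_bounded_sets_const: "lipschitz_on_bounded_sets (\<lambda>x. c)"
  unfolding lipschitz_on_bounded_sets_def using lipschitz_on_constant by blast

lemma lipschitz_on_bounded_sets_linear:
  "bounded_linear f \<Longrightarrow> lipschitz_on_bounded_sets f"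
  unfolding lipschitz_on_bounded_sets_def by (meson bounded_linear.lipschitz_boundE)

lemma lipschitz_on_bounded_sets_compose:
  assumes f: "lipschitz_on_bounded_sets f" and g: "lipschitz_on_bounded_sets g"
  shows "lipschitz_on_bounded_sets (\<lambda>x. g (f x))"
  unfolding lipschitz_on_bounded_sets_def
proof (intro allI impI)
  fix S :: "'a set"
  assume S: "bounded S"
  obtain C where C: "C-lipschitz_on S f"
    using f S by (rule lipschitz_on_bounded_setsE)
  obtain D where "D-lipschitz_on (f ` S) g"
    using g bounded_lipschitz_image[OF C S] by (rule lipschitz_on_bounded_setsE)
  then show "\<exists>K. K-lipschitz_on S (\<lambda>x. g (f x))"
    using lipschitz_on_compose2[OF C] by blast
qed

lemma lipschitz_on_bounded_sets_add:
  fixes f g :: "'a::metric_space \<Rightarrow> 'b::real_normed_vector"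
  assumes f: "lipschitz_on_bounded_sets f" and g: "lipschitz_on_bounded_sets g"
  shows "lipschitz_on_bounded_sets (\<lambda>x. f x + g x)"
  unfolding lipschitz_on_bounded_sets_def
proof (intro allI impI)
  fix S :: "'a set"
  assume S: "bounded S"
  obtain C where "C-lipschitz_on S f"
    using f S by (rule lipschitz_on_bounded_setsE)
  moreover obtain D where "D-lipschitz_on S g"
    using g S by (rule lipschitz_on_bounded_setsE)
  ultimately show "\<exists>K. K-lipschitz_on S (\<lambda>x. f x + g x)"
    by (blast intro: lipschitz_on_add)
qed

lemma lipschitz_on_bounded_sets_bilinear:
  fixes f :: "'a::metric_space \<Rightarrow> 'b::real_normed_vector" and g :: "'a \<Rightarrow> 'c::real_normed_vector"
  assumes bil: "bounded_bilinear bil"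
    and f: "lipschitz_on_bounded_sets f" and g: "lipschitz_on_bounded_sets g"
  shows "lipschitz_on_bounded_sets (\<lambda>x. bil (f x) (g x))"
  unfolding lipschitz_on_bounded_sets_def
proof (intro allI impI)
  fix S :: "'a set"
  assume S: "bounded S"
  obtain C where C: "C-lipschitz_on S f"
    using f S by (rule lipschitz_on_bounded_setsE)
  obtain D where D: "D-lipschitz_on S g"
    using g S by (rule lipschitz_on_bounded_setsE)
  obtain Bf where Bf: "Bf > 0" "\<And>x. x \<in> S \<Longrightarrow> norm (f x) \<le> Bf"
    using bounded_lipschitz_image[OF C S] by (auto simp: bounded_pos)
  obtain Bg where Bg: "Bg > 0" "\<And>x. x \<in> S \<Longrightarrow> norm (g x) \<le> Bg"
    using bounded_lipschitz_image[OF D S] by (auto simp: bounded_pos)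
  obtain K where K: "K > 0" "\<And>a b. norm (bil a b) \<le> norm a * norm b * K"
    using bounded_bilinear.pos_bounded[OF bil] by blast
  have "dist (bil (f y) (g y)) (bil (f z) (g z)) \<le> ((C * Bg + Bf * D) * K) * dist y z"
    if y: "y \<in> S" and z: "z \<in> S" for y z
  proof -
    have "bil (f y) (g y) - bil (f z) (g z) = bil (f y - f z) (g y) + bil (f z) (g y - g z)"
      by (simp add: bounded_bilinear.diff_left[OF bil] bounded_bilinear.diff_right[OF bil])
    then have "dist (bil (f y) (g y)) (bil (f z) (g z))
        \<le> norm (bil (f y - f z) (g y)) + norm (bil (f z) (g y - g z))"
      by (simp add: dist_norm norm_triangle_ineq)
    also have "\<dots> \<le> norm (f y - f z) * norm (g y) * K + norm (f z) * norm (g y - g z) * K"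
      by (intro add_mono K(2))
    also have "\<dots> \<le> (C * dist y z) * Bg * K + Bf * (D * dist y z) * K"
      using lipschitz_onD[OF C y z] lipschitz_onD[OF D y z] lipschitz_on_nonneg[OF C] Bf Bg y z K(1)
      by (intro add_mono mult_right_mono mult_mono) (auto simp: dist_norm)
    finally show ?thesis
      by (simp add: algebra_simps)
  qed
  then show "\<exists>K. K-lipschitz_on S (\<lambda>x. bil (f x) (g x))"
    using Bf Bg K lipschitz_on_nonneg[OF C] lipschitz_on_nonneg[OF D]
    by (intro exI[of _ "(C * Bg + Bf * D) * K"] lipschitz_onI) auto
qed

lemma lipschitz_on_bounded_sets_glue:
  fixes f g :: "real \<Rightarrow> 'b::metric_space"
  assumes f: "lipschitz_on_bounded_sets f" and g: "lipschitz_on_bounded_sets g" and fg: "f a = g a"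
  shows "lipschitz_on_bounded_sets (\<lambda>x. if x \<le> a then f x else g x)"
  unfolding lipschitz_on_bounded_sets_def
proof (intro allI impI)
  fix S :: "real set"
  assume "bounded S"
  then obtain r where r: "\<forall>x\<in>S. \<bar>x\<bar> \<le> r"
    by (auto simp: bounded_iff)
  obtain C where "C-lipschitz_on {min (-r) a..a} f"
    by (rule lipschitz_on_bounded_setsE[OF f bounded_closed_interval])
  moreover obtain D where "D-lipschitz_on {a..max r a} g"
    by (rule lipschitz_on_bounded_setsE[OF g bounded_closed_interval])
  ultimately have "(max C D)-lipschitz_on {min (-r) a..max r a} (\<lambda>x. if x \<le> a then f x else g x)"
    using fg by (rule lipschitz_on_concat_max)
  moreover have "S \<subseteq> {min (-r) a..max r a}"
  proof
    fix x
    assume "x \<in> S"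
    then have "-r \<le> x \<and> x \<le> r"
      using r by (auto simp: abs_le_iff)
    then show "x \<in> {min (-r) a..max r a}"
      by (simp add: min_le_iff_disj le_max_iff_disj)
  qed
  ultimately have "(max C D)-lipschitz_on S (\<lambda>x. if x \<le> a then f x else g x)"
    by (rule lipschitz_on_subset)
  then show "\<exists>K. K-lipschitz_on S (\<lambda>x. if x \<le> a then f x else g x)"
    by blast
qed

lemma lipschitz_on_bounded_sets_if_continuous_deriv:
  fixes f :: "real \<Rightarrow> real"
  assumes f: "\<And>x. (f has_real_derivative f' x) (at x)" and f': "continuous_on UNIV f'"
  shows "lipschitz_on_bounded_sets f"
  unfolding lipschitz_on_bounded_sets_def
proof (intro allI impI)
  fix S :: "real set"
  assume "bounded S"
  then obtain r where "\<forall>x\<in>S. norm x \<le> r"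
    by (auto simp: bounded_iff)
  then have r: "S \<subseteq> cball 0 r"
    by auto
  have "bounded (f' ` cball 0 r)"
    using f' by (intro compact_imp_bounded compact_continuous_image) (auto intro: continuous_on_subset)
  then obtain B where B: "\<forall>x\<in>cball 0 r. \<bar>f' x\<bar> \<le> B"
    by (auto simp: bounded_iff)
  have "(max B 0)-lipschitz_on (cball 0 r) f"
  proof (rule bounded_derivative_imp_lipschitz)
    show "(f has_derivative (*) (f' x)) (at x within cball 0 r)" for x
      using f[of x] by (simp add: has_field_derivative_def has_derivative_at_withinI)
    show "onorm ((*) (f' x)) \<le> max B 0" if "x \<in> cball 0 r" for x
    proof (rule onorm_le)
      have "\<bar>f' x\<bar> \<le> max B 0"
        using B that by fastforce
      then show "norm (f' x * h) \<le> max B 0 * norm h" for h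
        by (simp add: abs_mult mult_right_mono)
    qed
  qed auto
  then show "\<exists>K. K-lipschitz_on S f"
    using r by (blast intro: lipschitz_on_subset)
qed

section \<open>Curvature bounds from a bounded Hessian\<close>

lemma convex_on_if_monotone_gradient:
  fixes \<phi> :: "'a::real_inner \<Rightarrow> real"
  assumes grad: "\<And>x. (\<phi> has_derivative (\<lambda>v. g x \<bullet> v)) (at x)"
    and mono: "\<And>x y. 0 \<le> (g x - g y) \<bullet> (x - y)"
  shows "convex_on UNIV \<phi>"
proof (rule convex_onI)
  fix t :: real and x y :: 'a
  assume t: "0 < t" "t < 1"
  define \<gamma> where "\<gamma> s = x + s *\<^sub>R (y - x)" for s
  define p' where "p' s = g (\<gamma> s) \<bullet> (y - x)" for s
  have "((\<lambda>s. \<phi> (\<gamma> s)) has_real_derivative p' s) (at s)" for s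
  proof -
    have "(\<gamma> has_derivative (\<lambda>h. h *\<^sub>R (y - x))) (at s)"
      unfolding \<gamma>_def[abs_def] by (auto intro!: derivative_eq_intros)
    from has_derivative_compose[OF this grad]
    have "((\<lambda>s. \<phi> (\<gamma> s)) has_derivative (\<lambda>h. g (\<gamma> s) \<bullet> (h *\<^sub>R (y - x)))) (at s)" .
    moreover have "(\<lambda>h. g (\<gamma> s) \<bullet> (h *\<^sub>R (y - x))) = (*) (p' s)"
      by (auto simp: p'_def)
    ultimately show ?thesis
      unfolding has_field_derivative_def by (simp only:)
  qed
  moreover have "p' a \<le> p' b" if "a \<le> b" for a b
  proof -
    have "0 \<le> (g (\<gamma> b) - g (\<gamma> a)) \<bullet> (\<gamma> b - \<gamma> a)"
      by (rule mono)
    also have "\<dots> = (b - a) * (p' b - p' a)"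
      by (simp add: \<gamma>_def p'_def inner_diff_left inner_diff_right scaleR_diff_left[symmetric]
          algebra_simps)
    finally show ?thesis
      using that by (cases "a = b") (auto simp: zero_le_mult_iff)
  qed
  ultimately have "convex_on UNIV (\<lambda>s. \<phi> (\<gamma> s))"
    by (intro convex_on_realI[where f'=p']) auto
  then have "\<phi> (\<gamma> ((1 - t) *\<^sub>R 0 + t *\<^sub>R 1)) \<le> (1 - t) * \<phi> (\<gamma> 0) + t * \<phi> (\<gamma> 1)"
    using t by (intro convex_onD) auto
  moreover have "\<gamma> t = (1 - t) *\<^sub>R x + t *\<^sub>R y"
    by (simp add: \<gamma>_def algebra_simps)
  ultimately show "\<phi> ((1 - t) *\<^sub>R x + t *\<^sub>R y) \<le> (1 - t) * \<phi> x + t * \<phi> y"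
    by (simp add: \<gamma>_def)
qed simp

lemma convex_on_add_sq_norm_if_lipschitz_gradient:
  fixes \<phi> :: "'a::real_inner \<Rightarrow> real"
  assumes grad: "\<And>x. (\<phi> has_derivative (\<lambda>v. g x \<bullet> v)) (at x)"
    and lip: "\<And>x y. dist (g x) (g y) \<le> K * dist x y"
  shows "convex_on UNIV (\<lambda>x. \<phi> x + K / 2 * (norm x)^2)"
proof (rule convex_on_if_monotone_gradient)
  show "((\<lambda>x. \<phi> x + K / 2 * (norm x)^2) has_derivative (\<lambda>v. (g x + K *\<^sub>R x) \<bullet> v)) (at x)" for x
    unfolding power2_norm_eq_inner
    by (auto intro!: derivative_eq_intros grad simp: inner_add_left inner_commute algebra_simps)
  show "0 \<le> ((g x + K *\<^sub>R x) - (g y + K *\<^sub>R y)) \<bullet> (x - y)" for x y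
  proof -
    have "- ((g x - g y) \<bullet> (x - y)) \<le> norm (g x - g y) * norm (x - y)"
      using Cauchy_Schwarz_ineq2[of "g x - g y" "x - y"] by linarith
    also have "\<dots> \<le> K * norm (x - y) * norm (x - y)"
      using lip[of x y] by (intro mult_right_mono) (auto simp: dist_norm)
    also have "\<dots> = K * ((x - y) \<bullet> (x - y))"
      by (simp add: power2_norm_eq_inner[symmetric] power2_eq_square)
    finally show ?thesis
      by (simp add: inner_diff_left inner_diff_right inner_add_left algebra_simps inner_commute)
  qed
qed

lemma curvature_bounded_if_hessian_bounded:
  fixes \<phi> :: "'a::real_inner \<Rightarrow> real"
  assumes grad: "\<And>x. (\<phi> has_derivative (\<lambda>v. g x \<bullet> v)) (at x)"
    and hess: "\<And>x. (g has_derivative blinfun_apply (H x)) (at x)"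
    and bound: "\<And>x. norm (H x) \<le> K"
  shows "curvature_bounded K \<phi>"
proof -
  have "K-lipschitz_on UNIV g"
    using hess bound order_trans[OF norm_ge_zero bound]
    by (intro bounded_derivative_imp_lipschitz) (auto simp: norm_blinfun.rep_eq)
  then have "dist (g x) (g y) \<le> K * dist x y" for x y
    by (simp add: lipschitz_onD)
  then show ?thesis
    unfolding curvature_bounded_def using grad convex_on_add_sq_norm_if_lipschitz_gradient by blast
qed

lemma twice_diff_loc_lip_hessI:
  fixes \<phi> :: "'a::real_inner \<Rightarrow> real"
  assumes "\<And>x. (\<phi> has_derivative (\<lambda>v. g x \<bullet> v)) (at x)"
    and "\<And>x. (g has_derivative blinfun_apply (H x)) (at x)"
    and H: "lipschitz_on_bounded_sets H"
  shows "twice_diff_loc_lip_hess \<phi>"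
proof -
  have "\<exists>e>0. \<exists>K. \<forall>y\<in>ball x e. \<forall>z\<in>ball x e. dist (H y) (H z) \<le> K * dist y z" for x
  proof -
    obtain K where "K-lipschitz_on (ball x 1) H"
      using H bounded_ball by (rule lipschitz_on_bounded_setsE)
    then show ?thesis
      by (intro exI[of _ 1] exI[of _ K]) (auto intro: lipschitz_onD)
  qed
  then show ?thesis
    unfolding twice_diff_loc_lip_hess_def using assms(1,2) by blast
qed

section \<open>Composition with a squared norm defect\<close>

lemma norm_blinfun_scaleR_left_inner_left:
  fixes y :: "'a::real_inner"
  shows "norm (blinfun_scaleR_left y o\<^sub>L blinfun_inner_left y) \<le> (norm y)^2"
proof (rule norm_blinfun_bound)
  fix v
  have "norm ((blinfun_scaleR_left y o\<^sub>L blinfun_inner_left y) v) = \<bar>v \<bullet> y\<bar> * norm y"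
    by simp
  also have "\<dots> \<le> norm v * norm y * norm y"
    by (intro mult_right_mono Cauchy_Schwarz_ineq2) simp
  finally show "norm ((blinfun_scaleR_left y o\<^sub>L blinfun_inner_left y) v) \<le> (norm y)^2 * norm v"
    by (simp add: power2_eq_square algebra_simps)
qed simp

locale sq_norm_defect =
  fixes A :: "'a::euclidean_space \<Rightarrow> 'b::euclidean_space" and c :: real
  assumes linear_A: "linear A"
begin

definition defect :: "'a \<Rightarrow> real" where
  "defect x = c - (norm (A x))^2"

definition gram :: "'a \<Rightarrow>\<^sub>L 'a" where
  "gram = Blinfun (\<lambda>x. adjoint A (A x))"

definition grad :: "(real \<Rightarrow> real) \<Rightarrow> 'a \<Rightarrow> 'a" where
  "grad p' x = (-2 * p' (defect x)) *\<^sub>R gram x"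

definition hess :: "(real \<Rightarrow> real) \<Rightarrow> (real \<Rightarrow> real) \<Rightarrow> 'a \<Rightarrow> 'a \<Rightarrow>\<^sub>L 'a" where
  "hess p' p'' x = (-2 * p' (defect x)) *\<^sub>R gram
     + (4 * p'' (defect x)) *\<^sub>R (blinfun_scaleR_left (gram x) o\<^sub>L blinfun_inner_left (gram x))"

lemma bounded_linear_A: "bounded_linear A"
  using linear_A linear_conv_bounded_linear by blast

lemma bounded_linear_adjoint: "bounded_linear (adjoint A)"
  using adjoint_linear[OF linear_A] linear_conv_bounded_linear by blast

lemma gram_apply: "gram x = adjoint A (A x)"
  unfolding gram_def
  by (metis bounded_linear_A bounded_linear_adjoint bounded_linear_compose bounded_linear_Blinfun_apply)

lemma inner_gram: "v \<bullet> gram x = A v \<bullet> A x"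
  by (simp add: gram_apply adjoint_works[OF linear_A])

lemma has_derivative_defect: "(defect has_derivative (\<lambda>v. (-2 *\<^sub>R gram x) \<bullet> v)) (at x)"
proof -
  have "((\<lambda>x. c - A x \<bullet> A x) has_derivative (\<lambda>v. 0 - (A x \<bullet> A v + A v \<bullet> A x))) (at x)"
    by (intro derivative_intros bounded_linear.has_derivative[OF bounded_linear_A has_derivative_ident])
  moreover have "(\<lambda>v. 0 - (A x \<bullet> A v + A v \<bullet> A x)) = (\<lambda>v. (-2 *\<^sub>R gram x) \<bullet> v)"
    by (auto simp: inner_gram inner_commute)
  ultimately show ?thesis
    by (simp add: defect_def[abs_def] power2_norm_eq_inner)
qed

lemma has_derivative_comp_defect:
  assumes "\<And>t. (p has_real_derivative p' t) (at t)"
  shows "((\<lambda>x. p (defect x)) has_derivative (\<lambda>v. grad p' x \<bullet> v)) (at x)"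
  by (rule has_derivative_eq_rhs[OF DERIV_compose_FDERIV[OF assms has_derivative_defect]])
    (auto simp: grad_def)

lemma has_derivative_grad:
  assumes "\<And>t. (p' has_real_derivative p'' t) (at t)"
  shows "(grad p' has_derivative blinfun_apply (hess p' p'' x)) (at x)"
proof -
  have "((\<lambda>x. -2 * p' (defect x)) has_derivative (\<lambda>v. -2 * ((-2 *\<^sub>R gram x) \<bullet> v * p'' (defect x)))) (at x)"
    by (intro derivative_intros DERIV_compose_FDERIV[OF assms has_derivative_defect])
  from has_derivative_scaleR[OF this
      bounded_linear.has_derivative[OF blinfun.bounded_linear_right[of gram] has_derivative_ident]]
  show ?thesis
    unfolding grad_def[abs_def]
    by (rule has_derivative_eq_rhs) (auto simp: fun_eq_iff hess_def blinfun.bilinear_simps inner_commute algebra_simps)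
qed

lemma norm_gram_apply_sq_le: "(norm (gram x))^2 \<le> (onorm (adjoint A))^2 * (c - defect x)"
proof -
  have "norm (gram x) \<le> onorm (adjoint A) * norm (A x)"
    unfolding gram_apply by (rule onorm[OF bounded_linear_adjoint])
  then have "(norm (gram x))^2 \<le> (onorm (adjoint A) * norm (A x))^2"
    by (simp add: power_mono)
  then show ?thesis
    by (simp add: defect_def power_mult_distrib)
qed

lemma norm_hess_le:
  assumes B1: "\<And>t. \<bar>p' t\<bar> \<le> B1" and B2: "\<And>t. \<bar>p'' t\<bar> \<le> B2" and B3: "\<And>t. \<bar>t * p'' t\<bar> \<le> B3"
  shows "norm (hess p' p'' x) \<le> 2 * B1 * norm gram + 4 * (onorm (adjoint A))^2 * (\<bar>c\<bar> * B2 + B3)"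
proof -
  let ?t = "defect x" and ?\<alpha> = "onorm (adjoint A)"
  have "\<bar>p'' ?t\<bar> * (norm (gram x))^2 \<le> \<bar>p'' ?t\<bar> * (?\<alpha>^2 * (c - ?t))"
    by (intro mult_left_mono norm_gram_apply_sq_le) simp
  also have "\<dots> \<le> \<bar>p'' ?t\<bar> * (?\<alpha>^2 * (\<bar>c\<bar> + \<bar>?t\<bar>))"
    by (intro mult_left_mono) auto
  also have "\<dots> = ?\<alpha>^2 * (\<bar>c\<bar> * \<bar>p'' ?t\<bar> + \<bar>?t * p'' ?t\<bar>)"
    by (simp add: abs_mult algebra_simps)
  also have "\<dots> \<le> ?\<alpha>^2 * (\<bar>c\<bar> * B2 + B3)"
    by (intro mult_left_mono add_mono B2 B3) auto
  finally have rank_one: "\<bar>p'' ?t\<bar> * (norm (gram x))^2 \<le> ?\<alpha>^2 * (\<bar>c\<bar> * B2 + B3)" .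
  have "norm (hess p' p'' x)
      \<le> 2 * \<bar>p' ?t\<bar> * norm gram
        + 4 * \<bar>p'' ?t\<bar> * norm (blinfun_scaleR_left (gram x) o\<^sub>L blinfun_inner_left (gram x))"
    unfolding hess_def by (rule order_trans[OF norm_triangle_ineq]) (simp add: abs_mult)
  also have "\<dots> \<le> 2 * B1 * norm gram + 4 * (\<bar>p'' ?t\<bar> * (norm (gram x))^2)"
  proof -
    have "\<bar>p' ?t\<bar> * norm gram \<le> B1 * norm gram"
      by (intro mult_right_mono B1) simp
    moreover have "\<bar>p'' ?t\<bar> * norm (blinfun_scaleR_left (gram x) o\<^sub>L blinfun_inner_left (gram x))
        \<le> \<bar>p'' ?t\<bar> * (norm (gram x))^2"
      by (intro mult_left_mono norm_blinfun_scaleR_left_inner_left) simp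
    ultimately show ?thesis
      by linarith
  qed
  also have "\<dots> \<le> 2 * B1 * norm gram + 4 * (?\<alpha>^2 * (\<bar>c\<bar> * B2 + B3))"
    using rank_one by simp
  finally show ?thesis
    by simp
qed

lemma lipschitz_on_bounded_sets_defect: "lipschitz_on_bounded_sets defect"
proof -
  have "defect = (\<lambda>x. c + (- A x) \<bullet> A x)"
    by (auto simp: defect_def power2_norm_eq_inner fun_eq_iff)
  moreover have "lipschitz_on_bounded_sets (\<lambda>x. c + (- A x) \<bullet> A x)"
    by (intro lipschitz_on_bounded_sets_add lipschitz_on_bounded_sets_const
        lipschitz_on_bounded_sets_bilinear[OF bounded_bilinear_inner]
        lipschitz_on_bounded_sets_linear bounded_linear_minus bounded_linear_A)
  ultimately show ?thesis
    by simp
qed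

lemma lipschitz_on_bounded_sets_hess:
  assumes p': "lipschitz_on_bounded_sets p'" and p'': "lipschitz_on_bounded_sets p''"
  shows "lipschitz_on_bounded_sets (hess p' p'')"
proof -
  have scalar: "lipschitz_on_bounded_sets (\<lambda>x. a * q (defect x))"
    if "lipschitz_on_bounded_sets q" for a :: real and q :: "real \<Rightarrow> real"
    by (intro lipschitz_on_bounded_sets_bilinear[OF bounded_bilinear_mult] lipschitz_on_bounded_sets_const
        lipschitz_on_bounded_sets_compose[OF lipschitz_on_bounded_sets_defect that])
  have gram: "lipschitz_on_bounded_sets (\<lambda>x. gram x)"
    by (rule lipschitz_on_bounded_sets_linear[OF blinfun.bounded_linear_right])
  have rank_one:
    "lipschitz_on_bounded_sets (\<lambda>x. blinfun_scaleR_left (gram x) o\<^sub>L blinfun_inner_left (gram x))"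
    by (intro lipschitz_on_bounded_sets_bilinear[OF bounded_bilinear_blinfun_compose]
        lipschitz_on_bounded_sets_compose[OF gram] lipschitz_on_bounded_sets_linear
        bounded_linear_blinfun_scaleR_left bounded_linear_blinfun_inner_left)
  show ?thesis
    unfolding hess_def[abs_def]
    by (intro lipschitz_on_bounded_sets_add lipschitz_on_bounded_sets_bilinear[OF bounded_bilinear_scaleR]
        scalar p' p'' rank_one lipschitz_on_bounded_sets_const)
qed

end

section \<open>The penalty function P2\<close>

lemma has_real_derivative_glue:
  fixes f g :: "real \<Rightarrow> real"
  assumes f: "\<And>x. (f has_real_derivative f' x) (at x)"
    and g: "\<And>x. (g has_real_derivative g' x) (at x)"
    and fg: "f a = g a" and fg': "f' a = g' a"
  shows "((\<lambda>x. if x \<le> a then f x else g x) has_real_derivative (if x \<le> a then f' x else g' x)) (at x)"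
    (is "(?h has_real_derivative _) _")
proof (cases x a rule: linorder_cases)
  case less
  have "(?h has_real_derivative f' x) (at x)"
    by (rule has_field_derivative_transform_within_open[OF f, of "{..<a}"]) (use less in auto)
  then show ?thesis
    using less by simp
next
  case greater
  have "(?h has_real_derivative g' x) (at x)"
    by (rule has_field_derivative_transform_within_open[OF g, of "{a<..}"]) (use greater in auto)
  then show ?thesis
    using greater by simp
next
  case equal
  have "(?h has_real_derivative f' a) (at a within {..a})"
    by (rule has_field_derivative_transform_within[OF has_field_derivative_at_within[OF f] zero_less_one])
      auto
  moreover have "(?h has_real_derivative f' a) (at a within {a..})"
    unfolding fg'
    by (rule has_field_derivative_transform_within[OF has_field_derivative_at_within[OF g] zero_less_one])
      (auto simp: fg)
  ultimately have "(?h has_real_derivative f' a) (at a within {..a} \<union> {a..})"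
    using Lim_within_Un unfolding has_field_derivative_iff by blast
  moreover have "{..a} \<union> {a..} = (UNIV :: real set)"
    by auto
  ultimately show ?thesis
    using equal by simp
qed

definition P2_root :: "real \<Rightarrow> real \<Rightarrow> real" where
  "P2_root x L = sqrt (15 * (L * x - 1/5)^2 + 2/5)"

(* The break points sit on the <= side, unlike in P2, so that has_real_derivative_glue applies
   piece by piece. *)
definition P2' :: "real \<Rightarrow> real \<Rightarrow> real" where
  "P2' x L = (if x \<le> 0 then 15 * L^2 * (L * x - 1/5) / P2_root x L
              else if x \<le> 1 / L then -3 * L^2 * (1 - L * x)^2 else 0)"

definition P2'' :: "real \<Rightarrow> real \<Rightarrow> real" where
  "P2'' x L = (if x \<le> 0 then 6 * L^3 / (P2_root x L)^3
               else if x \<le> 1 / L then 6 * L^3 * (1 - L * x) else 0)"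

lemma P2_root_pos: "0 < P2_root x L"
  unfolding P2_root_def by (simp add: add_nonneg_pos)

lemma P2_root_neq_0 [simp]: "P2_root x L \<noteq> 0"
  using P2_root_pos[of x L] by simp

lemma P2_root_0 [simp]: "P2_root 0 L = 1"
  by (simp add: P2_root_def power2_eq_square)

lemma P2_root_sq: "(P2_root x L)^2 = 15 * (L * x - 1/5)^2 + 2/5"
  unfolding P2_root_def by (simp add: add_nonneg_pos)

lemma P2_root_sq_ge:
  assumes "0 < L" "x \<le> 0"
  shows "1 - 6 * L * x \<le> (P2_root x L)^2"
proof -
  have "(P2_root x L)^2 = 15 * (L * x)^2 + (1 - 6 * L * x)"
    unfolding P2_root_sq by (simp add: power2_eq_square field_simps)
  then show ?thesis
    by simp
qed

lemma P2_root_ge_1: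
  assumes "0 < L" "x \<le> 0"
  shows "1 \<le> P2_root x L"
proof -
  have "0 \<le> - (L * x)"
    using assms by (simp add: mult_nonneg_nonpos)
  then have "1 \<le> (P2_root x L)^2"
    using P2_root_sq_ge[OF assms] by linarith
  then show ?thesis
    unfolding P2_root_sq by (simp add: P2_root_def)
qed

lemma has_real_derivative_P2_root:
  "((\<lambda>x. P2_root x L) has_real_derivative 15 * L * (L * x - 1/5) / P2_root x L) (at x)"
proof -
  have pos: "0 < 15 * (L * x - 1/5)^2 + 2/5"
    by (simp add: add_nonneg_pos)
  have "((\<lambda>x. 15 * (L * x - 1/5)^2 + 2/5) has_real_derivative 30 * L * (L * x - 1/5)) (at x)"
    by (rule derivative_eq_intros refl)+ (simp add: algebra_simps)
  from DERIV_chain2[OF DERIV_real_sqrt[OF pos] this]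
  have "((\<lambda>x. P2_root x L) has_real_derivative
      inverse (P2_root x L) / 2 * (30 * L * (L * x - 1/5))) (at x)"
    unfolding P2_root_def .
  moreover have "inverse (P2_root x L) / 2 * (30 * L * (L * x - 1/5))
      = 15 * L * (L * x - 1/5) / P2_root x L"
    using P2_root_pos[of x L] by (simp add: field_simps)
  ultimately show ?thesis
    by (rule DERIV_cong)
qed

lemma continuous_on_P2_root: "continuous_on UNIV (\<lambda>x. P2_root x L)"
  unfolding P2_root_def by (intro continuous_intros)

lemma P2_eq_piecewise:
  assumes "0 < L"
  shows "P2 x L = (if x \<le> 0 then L * P2_root x L else if x \<le> 1 / L then L * (1 - L * x)^3 else 0)"
  using assms by (auto simp: P2_def P2_root_def not_less intro: order_trans[of _ 0])

lemma P2_eq_0: "1 / L < x \<Longrightarrow> P2 x L = 0"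
  by (simp add: P2_def)

lemma P2_middle_range:
  fixes L x :: real
  assumes "0 < L" "0 < x" "x \<le> 1 / L"
  shows "0 < L * x \<and> L * x \<le> 1"
  using assms by (simp add: pos_le_divide_eq mult.commute)

lemma has_real_derivative_P2_left:
  "((\<lambda>x. L * P2_root x L) has_real_derivative 15 * L^2 * (L * x - 1/5) / P2_root x L) (at x)"
  by (rule DERIV_cong[OF DERIV_cmult[OF has_real_derivative_P2_root]]) (simp add: power2_eq_square)

lemma has_real_derivative_P2'_left:
  "((\<lambda>x. 15 * L^2 * (L * x - 1/5) / P2_root x L) has_real_derivative 6 * L^3 / (P2_root x L)^3) (at x)"
proof -
  let ?s = "P2_root x L"
  have "((\<lambda>x. 15 * L^2 * (L * x - 1/5) / P2_root x L) has_real_derivative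
      (15 * L^3 * ?s - 15 * L^2 * (L * x - 1/5) * (15 * L * (L * x - 1/5) / ?s)) / (?s * ?s)) (at x)"
    using P2_root_pos[of x L]
    by (auto intro!: derivative_eq_intros has_real_derivative_P2_root simp: power2_eq_square power3_eq_cube)
  moreover have "(15 * L^3 * ?s - 15 * L^2 * (L * x - 1/5) * (15 * L * (L * x - 1/5) / ?s)) / (?s * ?s)
      = 15 * L^3 * (?s^2 - 15 * (L * x - 1/5)^2) / ?s^3"
    using P2_root_pos[of x L] by (simp add: field_simps power2_eq_square power3_eq_cube)
  ultimately show ?thesis
    by (simp add: P2_root_sq)
qed

lemma has_real_derivative_P2''_left:
  "((\<lambda>x. 6 * L^3 / (P2_root x L)^3) has_real_derivative -270 * L^4 * (L * x - 1/5) / (P2_root x L)^5) (at x)"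
proof -
  let ?s = "P2_root x L"
  have "((\<lambda>x. 6 * L^3 / (P2_root x L)^3) has_real_derivative
      - (6 * L^3 * (3 * ?s^2 * (15 * L * (L * x - 1/5) / ?s))) / (?s^3 * ?s^3)) (at x)"
    using P2_root_pos[of x L]
    by (auto intro!: derivative_eq_intros has_real_derivative_P2_root)
  moreover have "- (6 * L^3 * (3 * ?s^2 * (15 * L * (L * x - 1/5) / ?s))) / (?s^3 * ?s^3)
      = -270 * L^4 * (L * x - 1/5) / ?s^5"
    using P2_root_pos[of x L] by (simp add: field_simps eval_nat_numeral)
  ultimately show ?thesis
    by simp
qed

lemma has_real_derivative_P2:
  assumes L: "0 < L"
  shows "((\<lambda>x. P2 x L) has_real_derivative P2' x L) (at x)"
proof -
  have right: "((\<lambda>x. if x \<le> 1 / L then L * (1 - L * x)^3 else 0) has_real_derivative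
      (if x \<le> 1 / L then -3 * L^2 * (1 - L * x)^2 else 0)) (at x)" for x
    by (rule has_real_derivative_glue)
      (auto intro!: derivative_eq_intros simp: L power2_eq_square algebra_simps)
  have "((\<lambda>x. if x \<le> 0 then L * P2_root x L else if x \<le> 1 / L then L * (1 - L * x)^3 else 0)
      has_real_derivative P2' x L) (at x)"
    unfolding P2'_def
    by (rule has_real_derivative_glue[OF has_real_derivative_P2_left right]) (use L in auto)
  then show ?thesis
    using L by (simp add: P2_eq_piecewise)
qed

lemma has_real_derivative_P2':
  assumes L: "0 < L"
  shows "((\<lambda>x. P2' x L) has_real_derivative P2'' x L) (at x)"
proof -
  have right: "((\<lambda>x. if x \<le> 1 / L then -3 * L^2 * (1 - L * x)^2 else 0) has_real_derivative
      (if x \<le> 1 / L then 6 * L^3 * (1 - L * x) else 0)) (at x)" for x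
    by (rule has_real_derivative_glue)
      (auto intro!: derivative_eq_intros simp: L power2_eq_square power3_eq_cube algebra_simps)
  show ?thesis
    unfolding P2'_def[abs_def] P2''_def
    by (rule has_real_derivative_glue[OF has_real_derivative_P2'_left right]) (use L in auto)
qed

lemma abs_P2'_le:
  assumes L: "0 < L"
  shows "\<bar>P2' x L\<bar> \<le> 4 * L^2"
proof (cases "x \<le> 0")
  case True
  let ?y = "L * x - 1/5" and ?s = "P2_root x L"
  have "(15 * \<bar>?y\<bar>)^2 \<le> (4 * ?s)^2"
    unfolding power_mult_distrib P2_root_sq by simp
  then have "15 * \<bar>?y\<bar> \<le> 4 * ?s"
    by (metis P2_root_pos less_imp_le mult_nonneg_nonneg zero_le_numeral power2_le_imp_le)
  then have "L^2 * (15 * \<bar>?y\<bar>) \<le> L^2 * (4 * ?s)"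
    by (intro mult_left_mono) auto
  then have "15 * L^2 * \<bar>?y\<bar> / ?s \<le> 4 * L^2"
    using P2_root_pos[of x L] by (simp add: divide_le_eq algebra_simps)
  then show ?thesis
    using True P2_root_pos[of x L] by (simp add: P2'_def abs_mult abs_divide)
next
  case False
  show ?thesis
  proof (cases "x \<le> 1 / L")
    case True
    then have "(1 - L * x)^2 \<le> 1"
      using False P2_middle_range[OF L, of x] by (intro power_le_one) auto
    have "\<bar>P2' x L\<bar> = 3 * L^2 * (1 - L * x)^2"
      using False True by (simp add: P2'_def abs_mult)
    also have "\<dots> \<le> 3 * L^2"
      using \<open>(1 - L * x)^2 \<le> 1\<close> by (intro mult_left_le) auto
    also have "\<dots> \<le> 4 * L^2"
      by simp
    finally show ?thesis .
  qed (use False L in \<open>simp add: P2'_def\<close>)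
qed

lemma abs_P2''_le:
  assumes L: "0 < L"
  shows "\<bar>P2'' x L\<bar> \<le> 6 * L^3"
proof (cases "x \<le> 0")
  case True
  have "1 \<le> (P2_root x L)^3"
    using P2_root_ge_1[OF L True] by (simp add: one_le_power)
  then have "6 * L^3 / (P2_root x L)^3 \<le> 6 * L^3 / 1"
    using L P2_root_pos[of x L] by (intro divide_left_mono) auto
  then show ?thesis
    using True L P2_root_pos[of x L] by (simp add: P2''_def)
next
  case False
  then show ?thesis
    using P2_middle_range[OF L, of x] L by (auto simp: P2''_def abs_mult)
qed

lemma abs_mult_P2''_le:
  assumes L: "0 < L"
  shows "\<bar>x * P2'' x L\<bar> \<le> 6 * L^2"
proof (cases "x \<le> 0")
  case True
  let ?s = "P2_root x L"
  have "- (L * x) \<le> ?s^2"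
    using P2_root_sq_ge[OF L True] mult_nonneg_nonpos[of L x] L True by linarith
  also have "\<dots> \<le> ?s^3"
    using P2_root_ge_1[OF L True] by (simp add: power_increasing)
  finally have bound: "- (L * x) \<le> ?s^3" .
  have s3: "0 < ?s^3"
    using P2_root_pos[of x L] by simp
  have "\<bar>x * P2'' x L\<bar> = 6 * L^2 * (- (L * x)) / ?s^3"
    using True L P2_root_pos[of x L]
    by (simp add: P2''_def abs_mult abs_of_nonpos power3_eq_cube power2_eq_square)
  also have "\<dots> \<le> 6 * L^2 * ?s^3 / ?s^3"
    using bound s3 by (intro divide_right_mono mult_left_mono) auto
  also have "\<dots> = 6 * L^2"
    using s3 by simp
  finally show ?thesis .
next
  case False
  show ?thesis
  proof (cases "x \<le> 1 / L")
    case True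
    then have Lx: "0 < L * x" "L * x \<le> 1"
      using False P2_middle_range[OF L, of x] by auto
    have "\<bar>x * P2'' x L\<bar> = 6 * L^2 * (L * x * (1 - L * x))"
      using False True Lx L by (simp add: P2''_def abs_mult power2_eq_square power3_eq_cube)
    also have "\<dots> \<le> 6 * L^2"
      using Lx by (intro mult_left_le) (auto intro: mult_le_one)
    finally show ?thesis .
  qed (use False L in \<open>simp add: P2''_def\<close>)
qed

lemma lipschitz_on_bounded_sets_P2':
  assumes L: "0 < L"
  shows "lipschitz_on_bounded_sets (\<lambda>x. P2' x L)"
proof -
  have "(6 * L^3)-lipschitz_on UNIV (\<lambda>x. P2' x L)"
  proof (rule bounded_derivative_imp_lipschitz)
    show "((\<lambda>x. P2' x L) has_derivative (*) (P2'' x L)) (at x within UNIV)" for x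
      using has_real_derivative_P2'[OF L, of x] by (simp add: has_field_derivative_def)
    show "onorm ((*) (P2'' x L)) \<le> 6 * L^3" for x
      using abs_P2''_le[OF L, of x] by (intro onorm_le) (simp add: abs_mult mult_right_mono)
  qed (use L in auto)
  then show ?thesis
    unfolding lipschitz_on_bounded_sets_def by (blast intro: lipschitz_on_subset)
qed

lemma lipschitz_on_bounded_sets_P2'':
  assumes L: "0 < L"
  shows "lipschitz_on_bounded_sets (\<lambda>x. P2'' x L)"
proof -
  have "continuous_on UNIV (\<lambda>x. -270 * L^4 * (L * x - 1/5) / (P2_root x L)^5)"
    by (intro continuous_intros continuous_on_P2_root) simp
  then have left: "lipschitz_on_bounded_sets (\<lambda>x. 6 * L^3 / (P2_root x L)^3)"
    by (rule lipschitz_on_bounded_sets_if_continuous_deriv[OF has_real_derivative_P2''_left])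
  have "((\<lambda>x. 6 * L^3 * (1 - L * x)) has_real_derivative - 6 * L^4) (at x)" for x
    by (auto intro!: derivative_eq_intros simp: power4_eq_xxxx power3_eq_cube)
  then have "lipschitz_on_bounded_sets (\<lambda>x. 6 * L^3 * (1 - L * x))"
    by (rule lipschitz_on_bounded_sets_if_continuous_deriv) simp
  then have right: "lipschitz_on_bounded_sets (\<lambda>x. if x \<le> 1 / L then 6 * L^3 * (1 - L * x) else 0)"
    by (rule lipschitz_on_bounded_sets_glue[OF _ lipschitz_on_bounded_sets_const]) (use L in simp)
  show ?thesis
    unfolding P2''_def
    by (rule lipschitz_on_bounded_sets_glue[OF left right]) (use L in simp)
qed

lemma P2'_nonpos:
  assumes L: "0 < L"
  shows "P2' x L \<le> 0"
proof (cases "x \<le> 0")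
  case True
  then have "L * x - 1/5 \<le> 0"
    using mult_nonneg_nonpos[of L x] L by linarith
  then show ?thesis
    using True P2_root_pos[of x L] L by (simp add: P2'_def divide_nonpos_pos mult_nonneg_nonpos)
qed (simp add: P2'_def)

lemma P2_antimono:
  assumes L: "0 < L" and "x \<le> y"
  shows "P2 y L \<le> P2 x L"
  by (rule DERIV_nonpos_imp_nonincreasing[where f = "\<lambda>x. P2 x L", OF \<open>x \<le> y\<close>])
    (use has_real_derivative_P2[OF L] P2'_nonpos[OF L] in blast)

lemma P2_nonneg:
  assumes L: "0 < L"
  shows "0 \<le> P2 x L"
proof -
  have "P2 (max x (2 / L)) L = 0"
    using L by (intro P2_eq_0) (simp add: less_max_iff_disj divide_strict_right_mono)
  then show ?thesis
    using P2_antimono[OF L, of x "max x (2 / L)"] by simp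
qed

lemma P2_monotone_in_gap:
  assumes L: "0 < L"
  shows "\<exists>g. mono g \<and> (\<forall>x. P2 x L = g (max (1 / L - x) 0))"
proof -
  have "P2 x L = P2 (1 / L - max (1 / L - x) 0) L" for x
    using L by (cases "x \<le> 1 / L") (simp_all add: P2_eq_0 P2_def)
  moreover have "mono (\<lambda>t. P2 (1 / L - t) L)"
    using L by (intro monoI P2_antimono) auto
  ultimately show ?thesis
    by blast
qed

theorem corollary3:
  fixes Ta Tb :: "real^3" and Tbar :: real
  shows "(\<forall>L2>0. twice_diff_loc_lip_hess (hbar Ta Tb Tbar L2))
       \<and> (\<exists>q :: real poly. \<forall>L2>0. curvature_bounded (poly q L2) (hbar Ta Tb Tbar L2))
       \<and> (\<forall>L2>0. (\<exists>g. mono g \<and> (\<forall>x. P2 x L2 = g (max (1 / L2 - x) 0)))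
                 \<and> (\<forall>x. 0 \<le> P2 x L2) \<and> (\<exists>x. P2 x L2 = 0)
                 \<and> P2 0 L2 = L2)"
proof -
  define A where "A R = fst R *v Ta - snd R *v Tb" for R :: "(real^3^3) \<times> (real^3^3)"
  have "linear A"
    by (rule linearI) (simp_all add: A_def matrix_vector_mult_add_rdistrib scaleR_matrix_vector_assoc algebra_simps)
  then interpret sq_norm_defect A "Tbar^2"
    by (rule sq_norm_defect.intro)
  have hbar: "hbar Ta Tb Tbar L = (\<lambda>R. P2 (defect R) L)" for L
    by (simp add: hbar_def hfun_def defect_def A_def fun_eq_iff)
  define \<alpha> where "\<alpha> = (onorm (adjoint A))^2"
  \<comment> \<open>norm_hess_le with the bounds 4 L^2, 6 L^3 and 6 L^2 on P2', P2'' and x P2''\<close>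
  define q where "q = [:0, 0, 8 * norm gram + 24 * \<alpha>, 24 * \<alpha> * Tbar^2:]"
  have "twice_diff_loc_lip_hess (hbar Ta Tb Tbar L) \<and> curvature_bounded (poly q L) (hbar Ta Tb Tbar L)"
    if L: "0 < L" for L
  proof -
    note has_grad = has_derivative_comp_defect[OF has_real_derivative_P2[OF L]]
    note has_hess = has_derivative_grad[OF has_real_derivative_P2'[OF L]]
    have "norm (hess (\<lambda>t. P2' t L) (\<lambda>t. P2'' t L) R) \<le> poly q L" for R
      using norm_hess_le[where p' = "\<lambda>t. P2' t L" and p'' = "\<lambda>t. P2'' t L",
          OF abs_P2'_le[OF L] abs_P2''_le[OF L] abs_mult_P2''_le[OF L], of R] L
      by (simp add: q_def \<alpha>_def algebra_simps power2_eq_square power3_eq_cube)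
    then show ?thesis
      unfolding hbar
      using twice_diff_loc_lip_hessI[OF has_grad has_hess lipschitz_on_bounded_sets_hess]
        curvature_bounded_if_hessian_bounded[OF has_grad has_hess]
        lipschitz_on_bounded_sets_P2'[OF L] lipschitz_on_bounded_sets_P2''[OF L]
      by blast
  qed
  moreover have "P2 (2 / L) L = 0 \<and> P2 0 L = L" if "0 < L" for L
    using that P2_eq_0[of L "2 / L"] by (simp add: divide_strict_right_mono P2_eq_piecewise)
  ultimately show ?thesis
    using P2_monotone_in_gap P2_nonneg by blast
qed

end
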